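(* Let $k$ be an infinite field of characteristic $0$ and let $W=(L,V)=\big(L(x_1,\dots,x_n),\bigoplus_{i=1}^nA(x_1,\dots,x_n)y_i\big)$ be the free representation with $n$ Lie-algebra generators and $n$ module generators. Then $(L\oplus V,p_V)$, with bracket $[l_1+v_1,l_2+v_2]=[l_1,l_2]+l_1\circ v_2-l_2\circ v_1$ and $p_V(l+v)=v$, is a free Lie algebra with projection-derivation with the $n$ free generators $m_i=x_i+y_i$, $1\le i\le n$.
   Context: $L(x_1,\dots,x_n)$ is the free Lie algebra over $k$, $A(x_1,\dots,x_n)$ the free associative algebra with unit (universal enveloping algebra of it), acting on the free module $\bigoplus_i A(x_1,\dots,x_n)y_i$. A Lie algebra with projection-derivation is a Lie algebra $M$ with linear $p:M\to M$ such that $p^2=p$ and $p[m_1,m_2]=[pm_1,m_2]+[m_1,pm_2]$; homomorphisms are Lie homomorphisms commuting with $p$. Free means: every map of the generators into any Lie algebra with projection-derivation extends uniquely to a homomorphism. *)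

theory Defs
  imports Main
begin

definition lie_pd_on ::
  "'a set \<Rightarrow> ('a \<Rightarrow> 'a \<Rightarrow> 'a) \<Rightarrow> 'a \<Rightarrow> ('k::field \<Rightarrow> 'a \<Rightarrow> 'a)
     \<Rightarrow> ('a \<Rightarrow> 'a \<Rightarrow> 'a) \<Rightarrow> ('a \<Rightarrow> 'a) \<Rightarrow> bool" where
  "lie_pd_on S add z sc br p \<longleftrightarrow>
     (\<forall>x\<in>S. \<forall>y\<in>S. add x y \<in> S) \<and> z \<in> S \<and> (\<forall>c. \<forall>x\<in>S. sc c x \<in> S) \<and>
     (\<forall>x\<in>S. \<forall>y\<in>S. br x y \<in> S) \<and> (\<forall>x\<in>S. p x \<in> S) \<and>
     \<comment> \<open>vector space axioms\<close>
     (\<forall>x\<in>S. \<forall>y\<in>S. \<forall>w\<in>S. add (add x y) w = add x (add y w)) \<and>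
     (\<forall>x\<in>S. \<forall>y\<in>S. add x y = add y x) \<and>
     (\<forall>x\<in>S. add z x = x) \<and>
     (\<forall>x\<in>S. add x (sc (-1) x) = z) \<and>
     (\<forall>c. \<forall>x\<in>S. \<forall>y\<in>S. sc c (add x y) = add (sc c x) (sc c y)) \<and>
     (\<forall>c d. \<forall>x\<in>S. sc (c + d) x = add (sc c x) (sc d x)) \<and>
     (\<forall>c d. \<forall>x\<in>S. sc c (sc d x) = sc (c * d) x) \<and>
     (\<forall>x\<in>S. sc 1 x = x) \<and>
     \<comment> \<open>Lie algebra axioms\<close>
     (\<forall>x\<in>S. \<forall>y\<in>S. \<forall>w\<in>S. br (add x y) w = add (br x w) (br y w)) \<and>
     (\<forall>x\<in>S. \<forall>y\<in>S. \<forall>w\<in>S. br w (add x y) = add (br w x) (br w y)) \<and>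
     (\<forall>c. \<forall>x\<in>S. \<forall>y\<in>S. br (sc c x) y = sc c (br x y)) \<and>
     (\<forall>c. \<forall>x\<in>S. \<forall>y\<in>S. br x (sc c y) = sc c (br x y)) \<and>
     (\<forall>x\<in>S. br x x = z) \<and>
     (\<forall>x\<in>S. \<forall>y\<in>S. \<forall>w\<in>S. add (add (br x (br y w)) (br y (br w x))) (br w (br x y)) = z) \<and>
     \<comment> \<open>projection-derivation\<close>
     (\<forall>x\<in>S. \<forall>y\<in>S. p (add x y) = add (p x) (p y)) \<and>
     (\<forall>c. \<forall>x\<in>S. p (sc c x) = sc c (p x)) \<and>
     (\<forall>x\<in>S. p (p x) = p x) \<and>
     (\<forall>x\<in>S. \<forall>y\<in>S. p (br x y) = add (br (p x) y) (br x (p y)))"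

definition lie_pd_hom ::
  "'a set \<Rightarrow> ('a \<Rightarrow> 'a \<Rightarrow> 'a) \<Rightarrow> ('k::field \<Rightarrow> 'a \<Rightarrow> 'a) \<Rightarrow> ('a \<Rightarrow> 'a \<Rightarrow> 'a) \<Rightarrow> ('a \<Rightarrow> 'a)
   \<Rightarrow> 'b set \<Rightarrow> ('b \<Rightarrow> 'b \<Rightarrow> 'b) \<Rightarrow> ('k \<Rightarrow> 'b \<Rightarrow> 'b) \<Rightarrow> ('b \<Rightarrow> 'b \<Rightarrow> 'b) \<Rightarrow> ('b \<Rightarrow> 'b)
   \<Rightarrow> ('a \<Rightarrow> 'b) \<Rightarrow> bool" where
  "lie_pd_hom S addS scS brS pS T addT scT brT pT h \<longleftrightarrow>
     (\<forall>x\<in>S. h x \<in> T) \<and>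
     (\<forall>x\<in>S. \<forall>y\<in>S. h (addS x y) = addT (h x) (h y)) \<and>
     (\<forall>c. \<forall>x\<in>S. h (scS c x) = scT c (h x)) \<and>
     (\<forall>x\<in>S. \<forall>y\<in>S. h (brS x y) = brT (h x) (h y)) \<and>
     (\<forall>x\<in>S. h (pS x) = pT (h x))"

text \<open>A noncommutative polynomial is its coefficient function on words (letters are
  natural numbers; letter i-1 stands for x_i).\<close>

type_synonym 'k ncpoly = "nat list \<Rightarrow> 'k"

definition nc_zero :: "'k::field ncpoly" where "nc_zero = (\<lambda>w. 0)"
definition nc_one :: "'k::field ncpoly" where "nc_one = (\<lambda>w. if w = [] then 1 else 0)"
definition nc_var :: "nat \<Rightarrow> 'k::field ncpoly" where "nc_var i = (\<lambda>w. if w = [i] then 1 else 0)"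
definition nc_add :: "'k::field ncpoly \<Rightarrow> 'k ncpoly \<Rightarrow> 'k ncpoly" where
  "nc_add a b = (\<lambda>w. a w + b w)"
definition nc_smult :: "'k::field \<Rightarrow> 'k ncpoly \<Rightarrow> 'k ncpoly" where
  "nc_smult c a = (\<lambda>w. c * a w)"
definition nc_mul :: "'k::field ncpoly \<Rightarrow> 'k ncpoly \<Rightarrow> 'k ncpoly" where
  "nc_mul a b = (\<lambda>w. \<Sum>i\<le>length w. a (take i w) * b (drop i w))"
definition nc_comm :: "'k::field ncpoly \<Rightarrow> 'k ncpoly \<Rightarrow> 'k ncpoly" where
  "nc_comm a b = nc_add (nc_mul a b) (nc_smult (-1) (nc_mul b a))"

definition free_assoc :: "nat \<Rightarrow> 'k::field ncpoly set" where
  "free_assoc n = {a. finite {w. a w \<noteq> 0} \<and> (\<forall>w. a w \<noteq> 0 \<longrightarrow> (\<forall>j\<in>set w. j < n))}"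

text \<open>The free Lie algebra L(x_1..x_n), realised as the Lie subalgebra of A(x_1..x_n)
  (with commutator bracket) generated by x_1..x_n.\<close>
inductive_set free_lie :: "nat \<Rightarrow> 'k::field ncpoly set" for n where
  fl_zero: "nc_zero \<in> free_lie n"
| fl_var: "i < n \<Longrightarrow> nc_var i \<in> free_lie n"
| fl_add: "a \<in> free_lie n \<Longrightarrow> b \<in> free_lie n \<Longrightarrow> nc_add a b \<in> free_lie n"
| fl_smult: "a \<in> free_lie n \<Longrightarrow> nc_smult c a \<in> free_lie n"
| fl_comm: "a \<in> free_lie n \<Longrightarrow> b \<in> free_lie n \<Longrightarrow> nc_comm a b \<in> free_lie n"

text \<open>An element of V is the family of its coefficients v i in A (coefficient of y_(i+1)).\<close>
definition free_module :: "nat \<Rightarrow> (nat \<Rightarrow> 'k::field ncpoly) set" where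
  "free_module n = {v. (\<forall>i<n. v i \<in> free_assoc n) \<and> (\<forall>i. n \<le> i \<longrightarrow> v i = nc_zero)}"

definition mod_gen :: "nat \<Rightarrow> nat \<Rightarrow> 'k::field ncpoly" where
  "mod_gen i = (\<lambda>j. if j = i then nc_one else nc_zero)"

text \<open>Action of L on V through the embedding into A = U(L): l o (a y_i) = (l a) y_i.\<close>
definition lie_act :: "'k::field ncpoly \<Rightarrow> (nat \<Rightarrow> 'k ncpoly) \<Rightarrow> (nat \<Rightarrow> 'k ncpoly)" where
  "lie_act l v = (\<lambda>i. nc_mul l (v i))"

type_synonym 'k lv = "'k ncpoly \<times> (nat \<Rightarrow> 'k ncpoly)"

definition lv_carrier :: "nat \<Rightarrow> 'k::field lv set" where
  "lv_carrier n = free_lie n \<times> free_module n"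

definition lv_add :: "'k::field lv \<Rightarrow> 'k lv \<Rightarrow> 'k lv" where
  "lv_add x y = (nc_add (fst x) (fst y), \<lambda>i. nc_add (snd x i) (snd y i))"

definition lv_zero :: "'k::field lv" where
  "lv_zero = (nc_zero, \<lambda>i. nc_zero)"

definition lv_smult :: "'k::field \<Rightarrow> 'k lv \<Rightarrow> 'k lv" where
  "lv_smult c x = (nc_smult c (fst x), \<lambda>i. nc_smult c (snd x i))"

definition lv_bracket :: "'k::field lv \<Rightarrow> 'k lv \<Rightarrow> 'k lv" where
  "lv_bracket x y = (nc_comm (fst x) (fst y),
      \<lambda>i. nc_add (lie_act (fst x) (snd y) i) (nc_smult (-1) (lie_act (fst y) (snd x) i)))"

definition lv_proj :: "'k::field lv \<Rightarrow> 'k lv" where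
  "lv_proj x = (nc_zero, snd x)"

text \<open>Generators m_i = x_i + y_i (indexed from 0).\<close>
definition lv_gen :: "nat \<Rightarrow> 'k::field lv" where
  "lv_gen i = (nc_var i, mod_gen i)"

end

theory Submission
  imports Defs "HOL-Algebra.FiniteProduct"
begin

text \<open>Write \<open>f i = t i + s i\<close> with \<open>t i = f i - p (f i)\<close> in the kernel and \<open>s i = p (f i)\<close>
  in the image of the projection-derivation \<open>p\<close> of the target \<open>T\<close>. The assignment
  \<open>x\<^sub>i \<mapsto> t i\<close> extends to a Lie homomorphism \<open>\<psi> : L \<rightarrow> T\<close>, realised by the
  Dynkin--Specht--Wever map \<open>\<psi> u = \<Sum>\<^sub>w u(w)/|w| [t w\<^sub>1, [\<dots>, t w\<^sub>k]]\<close>, and \<open>A\<close> acts on \<open>T\<close>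
  through \<open>ad \<circ> \<psi>\<close>. The extension is \<open>h (l + \<Sum> a\<^sub>i y\<^sub>i) = \<psi> l + \<Sum> a\<^sub>i \<cdot> s i\<close>. It respects \<open>p\<close>
  because \<open>\<psi>\<close> lands in the kernel and the \<open>A\<close>-action preserves the image of \<open>p\<close>; it
  respects brackets because the image of \<open>p\<close> is abelian: \<open>p [x, y] = 2 [x, y]\<close> there, and
  \<open>p\<^sup>2 = p\<close> forces \<open>[x, y] = 0\<close> in characteristic 0. Uniqueness holds because
  \<open>x\<^sub>i = m\<^sub>i - p m\<^sub>i\<close> and \<open>y\<^sub>i = p m\<^sub>i\<close> generate \<open>L \<oplus> V\<close>.\<close>

lemma nc_mul_Nil: "nc_mul a b [] = a [] * b []"
  by (simp add: nc_mul_def)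

lemma nc_mul_Cons: "nc_mul a b (x # w) = a [] * b (x # w) + nc_mul (\<lambda>u. a (x # u)) b w"
  unfolding nc_mul_def by (simp add: sum.atMost_Suc_shift del: sum.atMost_Suc)

lemma nc_mul_add_left: "nc_mul (\<lambda>u. f u + g u) c = (\<lambda>w. nc_mul f c w + nc_mul g c w)"
  by (simp add: nc_mul_def fun_eq_iff distrib_right sum.distrib)

lemma nc_mul_add_right: "nc_mul c (\<lambda>u. f u + g u) = (\<lambda>w. nc_mul c f w + nc_mul c g w)"
  by (simp add: nc_mul_def fun_eq_iff distrib_left sum.distrib)

lemma nc_mul_smult_left: "nc_mul (\<lambda>u. k * f u) c = (\<lambda>w. k * nc_mul f c w)"
  by (simp add: nc_mul_def fun_eq_iff sum_distrib_left mult.assoc)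

lemma nc_mul_smult_right: "nc_mul c (\<lambda>u. k * f u) = (\<lambda>w. k * nc_mul c f w)"
  by (simp add: nc_mul_def fun_eq_iff sum_distrib_left mult_ac)

lemma nc_mul_zero_left: "nc_mul (\<lambda>u. 0) c = (\<lambda>w. 0)"
  by (simp add: nc_mul_def)

lemma nc_mul_zero_right: "nc_mul c (\<lambda>u. 0) = (\<lambda>w. 0)"
  by (simp add: nc_mul_def)

lemma nc_zero_mul[simp]: "nc_mul nc_zero b = nc_zero"
  by (simp add: nc_zero_def nc_mul_zero_left)

lemma nc_mul_zero[simp]: "nc_mul a nc_zero = nc_zero"
  by (simp add: nc_zero_def nc_mul_zero_right)

lemma nc_mul_diff_left: "nc_mul (\<lambda>u. f u - g u) c = (\<lambda>w. nc_mul f c w - nc_mul g c w)"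
  by (simp add: nc_mul_def fun_eq_iff left_diff_distrib sum_subtractf)

lemma nc_mul_diff_right: "nc_mul c (\<lambda>u. f u - g u) = (\<lambda>w. nc_mul c f w - nc_mul c g w)"
  by (simp add: nc_mul_def fun_eq_iff right_diff_distrib sum_subtractf)

lemma nc_mul_minus_left: "nc_mul (\<lambda>u. - f u) c = (\<lambda>w. - nc_mul f c w)"
  by (simp add: nc_mul_def fun_eq_iff sum_negf)

lemma nc_mul_minus_right: "nc_mul c (\<lambda>u. - f u) = (\<lambda>w. - nc_mul c f w)"
  by (simp add: nc_mul_def fun_eq_iff sum_negf)

lemma nc_mul_assoc: "nc_mul (nc_mul a b) c = nc_mul a (nc_mul b c)"
proof
  show "nc_mul (nc_mul a b) c w = nc_mul a (nc_mul b c) w" for w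
  proof (induction w arbitrary: a b c)
    case Nil
    then show ?case by (simp add: nc_mul_Nil mult.assoc)
  next
    case (Cons x w)
    have "(\<lambda>u. nc_mul a b (x # u)) = (\<lambda>u. a [] * b (x # u) + nc_mul (\<lambda>u. a (x # u)) b u)"
      by (simp add: nc_mul_Cons)
    then show ?case
      by (simp add: nc_mul_Cons nc_mul_add_left nc_mul_smult_left Cons.IH nc_mul_Nil algebra_simps)
  qed
qed

lemmas nc_simps = nc_add_def nc_smult_def nc_zero_def nc_comm_def
  nc_mul_add_left nc_mul_add_right nc_mul_smult_left nc_mul_smult_right
  nc_mul_zero_left nc_mul_zero_right nc_mul_diff_left nc_mul_diff_right
  nc_mul_minus_left nc_mul_minus_right nc_mul_assoc

lemma nc_mul_nonzero_split:
  "nc_mul a b w \<noteq> 0 \<Longrightarrow> \<exists>u v. w = u @ v \<and> a u \<noteq> 0 \<and> b v \<noteq> 0"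
proof -
  assume "nc_mul a b w \<noteq> 0"
  then obtain i where "i \<le> length w" "a (take i w) * b (drop i w) \<noteq> 0"
    unfolding nc_mul_def by (meson sum.not_neutral_contains_not_neutral atMost_iff)
  then show ?thesis by (intro exI[of _ "take i w"] exI[of _ "drop i w"]) auto
qed

definition nc_monom :: "nat list \<Rightarrow> 'k::field ncpoly" where
  "nc_monom u = (\<lambda>w. if w = u then 1 else 0)"

lemma nc_var_eq_monom: "nc_var i = nc_monom [i]"
  by (simp add: nc_var_def nc_monom_def)

lemma nc_one_eq_monom: "nc_one = nc_monom []"
  by (simp add: nc_one_def nc_monom_def)

lemma nc_mul_monom: "nc_mul (nc_monom u) (nc_monom v) = nc_monom (u @ v)"
proof
  fix w
  have "nc_mul (nc_monom u) (nc_monom v) w =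
      (\<Sum>i\<le>length w. if i = length u then nc_monom (u @ v) w else 0)"
    unfolding nc_mul_def
  proof (rule sum.cong[OF refl])
    fix i assume "i \<in> {..length w}"
    then have i: "i \<le> length w" by simp
    show "nc_monom u (take i w) * nc_monom v (drop i w) =
        (if i = length u then nc_monom (u @ v) w else 0)"
    proof (cases "i = length u")
      case True
      then show ?thesis using i
        by (auto simp: nc_monom_def append_eq_conv_conj) (metis append_take_drop_id)
    next
      case False
      then have "take i w \<noteq> u" using i by auto
      then show ?thesis using False by (simp add: nc_monom_def)
    qed
  qed
  then show "nc_mul (nc_monom u) (nc_monom v) w = nc_monom (u @ v) w"
    by (auto simp: nc_monom_def)
qed

abbreviation nc_finite :: "'k::field ncpoly \<Rightarrow> bool" where
  "nc_finite a \<equiv> finite {w. a w \<noteq> 0}"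

lemma nc_finite_monom[simp]: "nc_finite (nc_monom u)"
  by (simp add: nc_monom_def)

lemma nc_finite_add: "nc_finite a \<Longrightarrow> nc_finite b \<Longrightarrow> nc_finite (nc_add a b)"
  by (rule finite_subset[of _ "{w. a w \<noteq> 0} \<union> {w. b w \<noteq> 0}"]) (auto simp: nc_add_def)

lemma nc_finite_smult: "nc_finite a \<Longrightarrow> nc_finite (nc_smult c a)"
  by (rule finite_subset[of _ "{w. a w \<noteq> 0}"]) (auto simp: nc_smult_def)

lemma nc_finite_mul: "nc_finite a \<Longrightarrow> nc_finite b \<Longrightarrow> nc_finite (nc_mul a b)"
  by (rule finite_subset[of _ "(\<lambda>(u, v). u @ v) ` ({w. a w \<noteq> 0} \<times> {w. b w \<noteq> 0})"])
    (auto dest!: nc_mul_nonzero_split)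

lemma nc_finite_induct[consumes 1, case_names zero monom]:
  assumes fin: "nc_finite a" and zero: "P nc_zero"
    and monom: "\<And>b u c. nc_finite b \<Longrightarrow> P b \<Longrightarrow> a u \<noteq> 0
       \<Longrightarrow> P (nc_add b (nc_smult c (nc_monom u)))"
  shows "P a"
proof -
  have "{w. b w \<noteq> 0} \<subseteq> A \<Longrightarrow> {w. b w \<noteq> 0} \<subseteq> {w. a w \<noteq> 0} \<Longrightarrow> P b" if "finite A" for A b
    using that
  proof (induction A arbitrary: b rule: finite_induct)
    case empty
    then have "b = nc_zero" by (auto simp: nc_zero_def)
    then show ?case using zero by simp
  next
    case (insert x A)
    define b' where "b' = b(x := 0)"
    have supp: "{w. b' w \<noteq> 0} \<subseteq> A" "{w. b' w \<noteq> 0} \<subseteq> {w. a w \<noteq> 0}"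
      using insert.prems by (auto simp: b'_def)
    have "b = nc_add b' (nc_smult (b x) (nc_monom x))"
      by (auto simp: b'_def nc_monom_def nc_add_def nc_smult_def)
    moreover have "nc_finite b'" using fin supp(2) by (rule finite_subset[rotated])
    moreover have "P b'" using insert.IH supp by blast
    ultimately show ?case
    proof (cases "b x = 0")
      case True
      then have "b' = b" by (auto simp: b'_def)
      with \<open>P b'\<close> show ?thesis by simp
    qed (use insert.prems monom[of b' x "b x"] in auto)
  qed
  from this[OF fin] show ?thesis by simp
qed

definition nc_sum :: "('x \<Rightarrow> 'k::field ncpoly) \<Rightarrow> 'x set \<Rightarrow> 'k ncpoly" where
  "nc_sum g A = (\<lambda>w. \<Sum>x\<in>A. g x w)"

lemma nc_sum_insert: "finite A \<Longrightarrow> x \<notin> A \<Longrightarrow> nc_sum g (insert x A) = nc_add (g x) (nc_sum g A)"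
  by (simp add: nc_sum_def nc_add_def)

lemma nc_sum_empty: "nc_sum g {} = nc_zero"
  by (simp add: nc_sum_def nc_zero_def)

lemma nc_finite_sum: "finite A \<Longrightarrow> (\<forall>i\<in>A. nc_finite (U i)) \<Longrightarrow> nc_finite (nc_sum U A)"
  by (induction A rule: finite_induct)
    (simp_all add: nc_sum_empty nc_sum_insert nc_finite_add nc_zero_def)

lemma nc_mul_sum_left: "nc_mul (nc_sum U A) b = nc_sum (\<lambda>i. nc_mul (U i) b) A"
  unfolding nc_mul_def nc_sum_def fun_eq_iff sum_distrib_right by (intro allI sum.swap)

lemma nc_mul_sum_right: "nc_mul b (nc_sum U A) = nc_sum (\<lambda>i. nc_mul b (U i)) A"
  unfolding nc_mul_def nc_sum_def fun_eq_iff sum_distrib_left by (intro allI sum.swap)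

lemma nc_comm_sum:
  "nc_comm (nc_sum U A) (nc_sum V B) = nc_sum (\<lambda>i. nc_sum (\<lambda>j. nc_comm (U i) (V j)) B) A"
proof
  fix w
  have "nc_comm (nc_sum U A) (nc_sum V B) w =
     (\<Sum>j\<in>B. \<Sum>i\<in>A. nc_mul (U i) (V j) w) - (\<Sum>i\<in>A. \<Sum>j\<in>B. nc_mul (V j) (U i) w)"
    by (simp only: nc_comm_def nc_add_def nc_smult_def nc_mul_sum_left nc_mul_sum_right)
      (simp add: nc_sum_def)
  then show "nc_comm (nc_sum U A) (nc_sum V B) w = nc_sum (\<lambda>i. nc_sum (\<lambda>j. nc_comm (U i) (V j)) B) A w"
    by (simp add: nc_sum_def nc_comm_def nc_add_def nc_smult_def sum_subtractf sum.swap[of _ B])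
qed

lemma free_assoc_finite: "a \<in> free_assoc n \<Longrightarrow> nc_finite a"
  by (simp add: free_assoc_def)

lemma free_assoc_zero: "nc_zero \<in> free_assoc n"
  by (simp add: free_assoc_def nc_zero_def)

lemma free_assoc_one: "nc_one \<in> free_assoc n"
  by (simp add: free_assoc_def nc_one_def)

lemma free_assoc_var: "i < n \<Longrightarrow> nc_var i \<in> free_assoc n"
  by (simp add: free_assoc_def nc_var_def)

lemma free_assoc_add: "a \<in> free_assoc n \<Longrightarrow> b \<in> free_assoc n \<Longrightarrow> nc_add a b \<in> free_assoc n"
  by (auto simp: free_assoc_def nc_finite_add) (metis add.left_neutral nc_add_def)

lemma free_assoc_smult: "a \<in> free_assoc n \<Longrightarrow> nc_smult c a \<in> free_assoc n"
  by (auto simp: free_assoc_def nc_finite_smult) (auto simp: nc_smult_def)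

lemma free_assoc_mul: "a \<in> free_assoc n \<Longrightarrow> b \<in> free_assoc n \<Longrightarrow> nc_mul a b \<in> free_assoc n"
  by (auto simp: free_assoc_def nc_finite_mul dest!: nc_mul_nonzero_split)

lemma free_assoc_comm: "a \<in> free_assoc n \<Longrightarrow> b \<in> free_assoc n \<Longrightarrow> nc_comm a b \<in> free_assoc n"
  by (simp add: nc_comm_def free_assoc_add free_assoc_smult free_assoc_mul)

lemma free_lie_in_free_assoc: "l \<in> free_lie n \<Longrightarrow> l \<in> free_assoc n"
  by (induction rule: free_lie.induct)
    (auto intro: free_assoc_zero free_assoc_var free_assoc_add free_assoc_smult free_assoc_comm)

lemma free_lie_finite: "l \<in> free_lie n \<Longrightarrow> nc_finite l"
  by (rule free_assoc_finite[OF free_lie_in_free_assoc])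

lemma free_module_finite: "v \<in> free_module n \<Longrightarrow> i < n \<Longrightarrow> nc_finite (v i)"
  by (auto simp: free_module_def intro!: free_assoc_finite)

lemma lv_add_closed: "x \<in> lv_carrier n \<Longrightarrow> y \<in> lv_carrier n \<Longrightarrow> lv_add x y \<in> lv_carrier n"
  by (auto simp: lv_carrier_def lv_add_def free_module_def intro: fl_add free_assoc_add)
    (simp add: nc_add_def nc_zero_def)

lemma lv_smult_closed: "x \<in> lv_carrier n \<Longrightarrow> lv_smult c x \<in> lv_carrier n"
  by (auto simp: lv_carrier_def lv_smult_def free_module_def intro: fl_smult free_assoc_smult)
    (simp add: nc_smult_def nc_zero_def)

lemma lv_zero_closed: "lv_zero \<in> lv_carrier n"
  by (auto simp: lv_carrier_def lv_zero_def free_module_def intro: fl_zero free_assoc_zero)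

lemma lv_proj_closed: "x \<in> lv_carrier n \<Longrightarrow> lv_proj x \<in> lv_carrier n"
  by (auto simp: lv_carrier_def lv_proj_def intro: fl_zero)

lemma lv_bracket_closed:
  "x \<in> lv_carrier n \<Longrightarrow> y \<in> lv_carrier n \<Longrightarrow> lv_bracket x y \<in> lv_carrier n"
proof -
  assume "x \<in> lv_carrier n" "y \<in> lv_carrier n"
  moreover have "nc_add (nc_mul a nc_zero) (nc_smult (- 1) (nc_mul b nc_zero)) = nc_zero"
    for a b :: "'a ncpoly"
    by (simp add: nc_simps)
  ultimately show ?thesis
    by (auto simp: lv_carrier_def lv_bracket_def free_module_def lie_act_def
        intro!: fl_comm free_assoc_add free_assoc_smult free_assoc_mul dest: free_lie_in_free_assoc)
qed

lemma lv_gen_closed: "i < n \<Longrightarrow> lv_gen i \<in> lv_carrier n"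
  by (auto simp: lv_carrier_def lv_gen_def free_module_def mod_gen_def
      intro: fl_var free_assoc_one free_assoc_zero)

lemma lv_jacobi:
  "lv_add (lv_add (lv_bracket x (lv_bracket y w)) (lv_bracket y (lv_bracket w x)))
     (lv_bracket w (lv_bracket x y)) = (lv_zero :: 'k::field lv)"
  by (simp add: nc_simps lv_add_def lv_zero_def lv_bracket_def lie_act_def fun_eq_iff algebra_simps)

lemma lv_proj_bracket:
  "lv_proj (lv_bracket x y) = lv_add (lv_bracket (lv_proj x) y) (lv_bracket x (lv_proj y))"
  by (simp add: nc_simps lv_add_def lv_bracket_def lv_proj_def lie_act_def fun_eq_iff)

lemma lie_pd_on_lv:
  "lie_pd_on (lv_carrier n) lv_add lv_zero (lv_smult :: 'k::field \<Rightarrow> _) lv_bracket lv_proj"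
  unfolding lie_pd_on_def
  apply (intro conjI ballI allI)
  apply (simp_all add: lv_add_closed lv_zero_closed lv_smult_closed lv_bracket_closed
      lv_proj_closed lv_jacobi lv_proj_bracket)
  apply (simp_all add: nc_simps lv_add_def lv_zero_def lv_smult_def lv_bracket_def lv_proj_def
      lie_act_def fun_eq_iff algebra_simps)
  done

section \<open>Homogeneous components of free Lie elements\<close>

text \<open>The Dynkin--Specht--Wever identity used below holds only for homogeneous Lie elements.\<close>

inductive_set homog_lie :: "nat \<Rightarrow> (nat \<times> 'k::field ncpoly) set" for n where
  homog_zero: "(m, nc_zero) \<in> homog_lie n"
| homog_var: "i < n \<Longrightarrow> (1, nc_var i) \<in> homog_lie n"
| homog_add: "(m, a) \<in> homog_lie n \<Longrightarrow> (m, b) \<in> homog_lie n \<Longrightarrow> (m, nc_add a b) \<in> homog_lie n"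
| homog_smult: "(m, a) \<in> homog_lie n \<Longrightarrow> (m, nc_smult c a) \<in> homog_lie n"
| homog_comm: "(p, a) \<in> homog_lie n \<Longrightarrow> (q, b) \<in> homog_lie n \<Longrightarrow> (p + q, nc_comm a b) \<in> homog_lie n"

lemma homog_lieD:
  "(m, u) \<in> homog_lie n \<Longrightarrow>
     u \<in> free_assoc n \<and> (\<forall>w. u w \<noteq> 0 \<longrightarrow> length w = m) \<and> u [] = 0"
proof (induction m u rule: homog_lie.induct)
  case (homog_zero m)
  then show ?case using free_assoc_zero[of n] by (simp add: nc_zero_def)
next
  case (homog_var i)
  then show ?case using free_assoc_var[of i n] by (simp add: nc_var_def)
next
  case (homog_add m a b)
  then show ?case using free_assoc_add[of a n b] by (auto simp: nc_add_def) (metis add_0)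
next
  case (homog_smult m a c)
  then show ?case using free_assoc_smult[of a n c] by (auto simp: nc_smult_def)
next
  case (homog_comm p a q b)
  have "length w = p + q" if "nc_comm a b w \<noteq> 0" for w
  proof -
    from that have "nc_mul a b w \<noteq> 0 \<or> nc_mul b a w \<noteq> 0"
      by (auto simp: nc_comm_def nc_add_def nc_smult_def)
    then show ?thesis using homog_comm.IH by (auto dest!: nc_mul_nonzero_split)
  qed
  then show ?case
    using homog_comm.IH free_assoc_comm[of a n b]
    by (simp add: nc_comm_def nc_add_def nc_smult_def nc_mul_Nil)
qed

lemma homog_lie_degree_zero: "(0, u) \<in> homog_lie n \<Longrightarrow> u = nc_zero"
  using homog_lieD[of 0 u n] by (auto simp: nc_zero_def fun_eq_iff)

lemma homog_lie_finite: "(m, u) \<in> homog_lie n \<Longrightarrow> nc_finite u"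
  using homog_lieD free_assoc_finite by blast

lemma homog_lie_sum:
  "finite A \<Longrightarrow> (\<forall>x\<in>A. (m, g x) \<in> homog_lie n) \<Longrightarrow> (m, nc_sum g A) \<in> homog_lie n"
  by (induction A rule: finite_induct) (simp_all add: nc_sum_empty nc_sum_insert homog_zero homog_add)

definition nc_homog_part :: "nat \<Rightarrow> 'k::field ncpoly \<Rightarrow> 'k ncpoly" where
  "nc_homog_part m a = (\<lambda>w. if length w = m then a w else 0)"

lemma nc_homog_part_mul:
  "nc_homog_part m (nc_mul a b) w = (\<Sum>p\<le>m. nc_mul (nc_homog_part p a) (nc_homog_part (m - p) b) w)"
proof -
  have split: "nc_mul (nc_homog_part p a) (nc_homog_part (m - p) b) w =
      (if length w = m then a (take p w) * b (drop p w) else 0)" if "p \<le> m" for p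
  proof (cases "length w = m")
    case True
    have "nc_mul (nc_homog_part p a) (nc_homog_part (m - p) b) w =
        (\<Sum>i\<le>length w. if i = p then a (take i w) * b (drop i w) else 0)"
      unfolding nc_mul_def nc_homog_part_def by (rule sum.cong) (use True that in auto)
    with True that show ?thesis by (simp add: sum.delta)
  next
    case False
    have "nc_mul (nc_homog_part p a) (nc_homog_part (m - p) b) w = (\<Sum>i\<le>length w. 0)"
      unfolding nc_mul_def nc_homog_part_def by (rule sum.cong) (use False that in auto)
    with False show ?thesis by simp
  qed
  have "(\<Sum>p\<le>m. nc_mul (nc_homog_part p a) (nc_homog_part (m - p) b) w) =
      (\<Sum>p\<le>m. if length w = m then a (take p w) * b (drop p w) else 0)"
    by (rule sum.cong) (simp_all add: split)
  then show ?thesis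
    by (cases "length w = m") (simp_all add: nc_homog_part_def nc_mul_def)
qed

lemma nc_homog_part_comm:
  "nc_homog_part m (nc_comm a b) =
     nc_sum (\<lambda>p. nc_comm (nc_homog_part p a) (nc_homog_part (m - p) b)) {..m}"
proof
  fix w
  have reverse: "(\<Sum>p\<le>m. nc_mul (nc_homog_part (m - p) b) (nc_homog_part p a) w) =
      (\<Sum>p\<le>m. nc_mul (nc_homog_part p b) (nc_homog_part (m - p) a) w)"
    using sum.nat_diff_reindex[of "\<lambda>p. nc_mul (nc_homog_part p b) (nc_homog_part (m - p) a) w" "Suc m"]
    by (simp add: lessThan_Suc_atMost)
  have "nc_homog_part m (nc_comm a b) w =
      nc_homog_part m (nc_mul a b) w - nc_homog_part m (nc_mul b a) w"
    by (simp add: nc_homog_part_def nc_comm_def nc_add_def nc_smult_def)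
  also have "\<dots> = (\<Sum>p\<le>m. nc_mul (nc_homog_part p a) (nc_homog_part (m - p) b) w)
      - (\<Sum>p\<le>m. nc_mul (nc_homog_part (m - p) b) (nc_homog_part p a) w)"
    by (simp add: nc_homog_part_mul reverse)
  also have "\<dots> = nc_sum (\<lambda>p. nc_comm (nc_homog_part p a) (nc_homog_part (m - p) b)) {..m} w"
    by (simp add: nc_sum_def nc_comm_def nc_add_def nc_smult_def sum_subtractf)
  finally show "nc_homog_part m (nc_comm a b) w =
      nc_sum (\<lambda>p. nc_comm (nc_homog_part p a) (nc_homog_part (m - p) b)) {..m} w" .
qed

lemma homog_lie_homog_part:
  fixes u :: "'k::field ncpoly"
  shows "u \<in> free_lie n \<Longrightarrow> (m, nc_homog_part m u) \<in> homog_lie n"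
proof (induction u arbitrary: m rule: free_lie.induct)
  case fl_zero
  have "nc_homog_part m nc_zero = (nc_zero :: 'k ncpoly)" by (simp add: nc_homog_part_def nc_zero_def)
  then show ?case by (simp add: homog_zero)
next
  case (fl_var i)
  have "nc_homog_part m (nc_var i) = (if m = 1 then nc_var i else (nc_zero :: 'k ncpoly))"
    by (auto simp: nc_homog_part_def nc_var_def nc_zero_def)
  with fl_var show ?case by (cases "m = 1") (auto intro: homog_var[simplified] homog_zero)
next
  case (fl_add a b)
  have "nc_homog_part m (nc_add a b) = nc_add (nc_homog_part m a) (nc_homog_part m b)"
    by (auto simp: nc_homog_part_def nc_add_def)
  then show ?case using fl_add by (simp add: homog_add)
next
  case (fl_smult a c)
  have "nc_homog_part m (nc_smult c a) = nc_smult c (nc_homog_part m a)"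
    by (auto simp: nc_homog_part_def nc_smult_def)
  then show ?case using fl_smult by (simp add: homog_smult)
next
  case (fl_comm a b)
  have "(m, nc_comm (nc_homog_part p a) (nc_homog_part (m - p) b)) \<in> homog_lie n" if "p \<le> m" for p
    using homog_comm[OF fl_comm.IH(1)[of p] fl_comm.IH(2)[of "m - p"]] that by simp
  then show ?case unfolding nc_homog_part_comm by (intro homog_lie_sum) auto
qed

lemma nc_sum_homog_parts:
  assumes "nc_finite u"
  obtains N where "u = nc_sum (\<lambda>m. nc_homog_part m u) {..N}"
proof -
  obtain N where "\<forall>w. u w \<noteq> 0 \<longrightarrow> length w \<le> N"
    using finite_nat_set_iff_bounded_le[of "length ` {w. u w \<noteq> 0}"] assms by auto
  then have "u = nc_sum (\<lambda>m. nc_homog_part m u) {..N}"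
    by (auto simp: fun_eq_iff nc_sum_def nc_homog_part_def sum.delta')
  then show ?thesis by (rule that)
qed

locale lie_pd_alg =
  fixes T :: "'b set" and addT :: "'b \<Rightarrow> 'b \<Rightarrow> 'b" and zT :: 'b
    and scT :: "'k::field \<Rightarrow> 'b \<Rightarrow> 'b" and brT :: "'b \<Rightarrow> 'b \<Rightarrow> 'b" and pT :: "'b \<Rightarrow> 'b"
  assumes add_closed[simp]: "x \<in> T \<Longrightarrow> y \<in> T \<Longrightarrow> addT x y \<in> T"
    and zero_closed[simp]: "zT \<in> T"
    and smult_closed[simp]: "x \<in> T \<Longrightarrow> scT c x \<in> T"
    and bracket_closed[simp]: "x \<in> T \<Longrightarrow> y \<in> T \<Longrightarrow> brT x y \<in> T"
    and proj_closed[simp]: "x \<in> T \<Longrightarrow> pT x \<in> T"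
    and add_assoc: "x \<in> T \<Longrightarrow> y \<in> T \<Longrightarrow> w \<in> T \<Longrightarrow> addT (addT x y) w = addT x (addT y w)"
    and add_commute: "x \<in> T \<Longrightarrow> y \<in> T \<Longrightarrow> addT x y = addT y x"
    and add_zero_left[simp]: "x \<in> T \<Longrightarrow> addT zT x = x"
    and add_neg: "x \<in> T \<Longrightarrow> addT x (scT (-1) x) = zT"
    and smult_add_right: "x \<in> T \<Longrightarrow> y \<in> T \<Longrightarrow> scT c (addT x y) = addT (scT c x) (scT c y)"
    and smult_add_left: "x \<in> T \<Longrightarrow> scT (c + d) x = addT (scT c x) (scT d x)"
    and smult_smult[simp]: "x \<in> T \<Longrightarrow> scT c (scT d x) = scT (c * d) x"
    and smult_one[simp]: "x \<in> T \<Longrightarrow> scT 1 x = x"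
    and bracket_add_left:
      "x \<in> T \<Longrightarrow> y \<in> T \<Longrightarrow> w \<in> T \<Longrightarrow> brT (addT x y) w = addT (brT x w) (brT y w)"
    and bracket_add_right:
      "x \<in> T \<Longrightarrow> y \<in> T \<Longrightarrow> w \<in> T \<Longrightarrow> brT w (addT x y) = addT (brT w x) (brT w y)"
    and bracket_smult_left: "x \<in> T \<Longrightarrow> y \<in> T \<Longrightarrow> brT (scT c x) y = scT c (brT x y)"
    and bracket_smult_right: "x \<in> T \<Longrightarrow> y \<in> T \<Longrightarrow> brT x (scT c y) = scT c (brT x y)"
    and bracket_self: "x \<in> T \<Longrightarrow> brT x x = zT"
    and jacobi: "x \<in> T \<Longrightarrow> y \<in> T \<Longrightarrow> w \<in> T \<Longrightarrow>
      addT (addT (brT x (brT y w)) (brT y (brT w x))) (brT w (brT x y)) = zT"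
    and proj_add: "x \<in> T \<Longrightarrow> y \<in> T \<Longrightarrow> pT (addT x y) = addT (pT x) (pT y)"
    and proj_smult: "x \<in> T \<Longrightarrow> pT (scT c x) = scT c (pT x)"
    and proj_idem[simp]: "x \<in> T \<Longrightarrow> pT (pT x) = pT x"
    and proj_bracket: "x \<in> T \<Longrightarrow> y \<in> T \<Longrightarrow> pT (brT x y) = addT (brT (pT x) y) (brT x (pT y))"

lemma lie_pd_on_imp_lie_pd_alg:
  "lie_pd_on T addT zT scT brT pT \<Longrightarrow> lie_pd_alg T addT zT scT brT pT"
  unfolding lie_pd_on_def lie_pd_alg_def by meson

context lie_pd_alg
begin

lemma add_zero_right[simp]: "x \<in> T \<Longrightarrow> addT x zT = x"
  by (metis add_commute add_zero_left zero_closed)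

lemma add_left_commute: "x \<in> T \<Longrightarrow> y \<in> T \<Longrightarrow> w \<in> T \<Longrightarrow> addT x (addT y w) = addT y (addT x w)"
  by (metis add_assoc add_commute)

lemma add_add_swap:
  "\<lbrakk>a \<in> T; b \<in> T; c \<in> T; d \<in> T\<rbrakk> \<Longrightarrow> addT (addT a b) (addT c d) = addT (addT a c) (addT b d)"
  by (simp add: add_assoc add_left_commute[of b c d])

lemma neg_add: "x \<in> T \<Longrightarrow> addT (scT (-1) x) x = zT"
  using add_commute[of "scT (-1) x" x] add_neg[of x] by simp

lemma add_left_cancel:
  assumes "x \<in> T" "y \<in> T" "w \<in> T" "addT w x = addT w y" shows "x = y"
proof -
  have "addT (scT (-1) w) (addT w x) = addT (scT (-1) w) (addT w y)" using assms by simp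
  then show ?thesis using assms by (metis add_assoc add_commute add_neg add_zero_left smult_closed)
qed

lemma eq_of_add_neg_eq_zero:
  assumes "x \<in> T" "y \<in> T" "addT x (scT (-1) y) = zT" shows "x = y"
proof -
  have "x = addT x (addT (scT (-1) y) y)" using assms by (simp add: neg_add)
  also have "\<dots> = addT (addT x (scT (-1) y)) y"
    using assms by (intro add_assoc[symmetric]) simp_all
  finally show ?thesis using assms by simp
qed

lemma smult_zero_left[simp]: assumes "x \<in> T" shows "scT 0 x = zT"
proof -
  have "addT (scT 0 x) (scT 0 x) = addT (scT 0 x) zT"
    using smult_add_left[OF assms, of 0 0] assms by simp
  then show ?thesis using assms by (metis add_left_cancel smult_closed zero_closed)
qed

lemma smult_zero_right[simp]: "scT c zT = zT"
  using smult_smult[of zT c 0] by simp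

lemma smult_left_cancel:
  assumes "x \<in> T" "y \<in> T" "scT c x = scT c y" "c \<noteq> 0" shows "x = y"
proof -
  have "x = scT (inverse c * c) x" using assms by simp
  also have "\<dots> = scT (inverse c) (scT c x)" by (simp only: smult_smult[OF assms(1)])
  also have "\<dots> = scT (inverse c) (scT c y)" using assms by simp
  also have "\<dots> = y" using assms by simp
  finally show ?thesis .
qed

lemma add_self: "x \<in> T \<Longrightarrow> addT x x = scT 2 x"
  using smult_add_left[of x 1 1] by simp

lemma bracket_zero_left[simp]: "x \<in> T \<Longrightarrow> brT zT x = zT"
  using bracket_smult_left[of zT x 0] by simp

lemma bracket_zero_right[simp]: "x \<in> T \<Longrightarrow> brT x zT = zT"
  using bracket_smult_right[of x zT 0] by simp

lemma proj_zero[simp]: "pT zT = zT"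
  using proj_smult[of zT 0] by simp

lemma bracket_anticomm: assumes "x \<in> T" "y \<in> T" shows "brT y x = scT (-1) (brT x y)"
proof -
  have "zT = brT (addT x y) (addT x y)" using assms by (simp add: bracket_self)
  also have "\<dots> = addT (addT (brT x x) (brT y x)) (addT (brT x y) (brT y y))"
    using assms by (simp add: bracket_add_left bracket_add_right)
  also have "\<dots> = addT (brT x y) (brT y x)"
    using assms by (simp add: bracket_self add_commute)
  finally have "addT (brT x y) (brT y x) = addT (brT x y) (scT (-1) (brT x y))"
    using assms by (simp add: add_neg)
  from add_left_cancel[OF _ _ _ this] show ?thesis using assms by simp
qed

lemma bracket_bracket_left:
  assumes "a \<in> T" "b \<in> T" "x \<in> T"
  shows "brT (brT a b) x = addT (brT a (brT b x)) (scT (-1) (brT b (brT a x)))"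
proof -
  have e1: "brT b (brT x a) = scT (-1) (brT b (brT a x))"
    using assms by (simp add: bracket_anticomm[of a x] bracket_smult_right)
  have e2: "brT x (brT a b) = scT (-1) (brT (brT a b) x)"
    using assms by (simp add: bracket_anticomm[of x "brT a b"])
  have "addT (addT (brT a (brT b x)) (scT (-1) (brT b (brT a x)))) (scT (-1) (brT (brT a b) x)) = zT"
    using jacobi[OF assms] e1 e2 by simp
  from eq_of_add_neg_eq_zero[OF _ _ this] show ?thesis using assms by simp
qed

lemma bracket_proj_image_eq_zero:
  assumes two: "(2 :: 'k) \<noteq> 0" and x: "x \<in> T" "pT x = x" and y: "y \<in> T" "pT y = y"
  shows "brT x y = zT"
proof -
  define B where "B = brT x y"
  have B: "B \<in> T" using x y by (simp add: B_def)
  have pB: "pT B = scT 2 B" using x y by (simp add: B_def proj_bracket add_self)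
  have "scT 2 (scT 2 B) = scT 2 B"
    using proj_idem[OF B] B by (simp add: pB proj_smult)
  then have "addT (scT 2 B) (scT 2 B) = addT (scT 2 B) zT"
    using B by (simp add: add_self)
  then have "scT 2 B = zT" using add_left_cancel[of "scT 2 B" zT "scT 2 B"] B by simp
  then show ?thesis using smult_left_cancel[of B zT 2] B two by (simp add: B_def)
qed

definition sum_monoid :: "'b monoid" where
  "sum_monoid = \<lparr>carrier = T, mult = addT, one = zT\<rparr>"

lemma comm_monoid_sum_monoid: "comm_monoid sum_monoid"
  unfolding comm_monoid_def monoid_def comm_monoid_axioms_def sum_monoid_def
  by (simp add: add_assoc add_commute add_left_commute)

lemma sum_monoid_simps[simp]:
  "carrier sum_monoid = T" "mult sum_monoid x y = addT x y" "one sum_monoid = zT"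
  by (simp_all add: sum_monoid_def)

definition sumT :: "('x \<Rightarrow> 'b) \<Rightarrow> 'x set \<Rightarrow> 'b" where
  "sumT g A = finprod sum_monoid g A"

lemma sumT_closed[simp]: "\<forall>x\<in>A. g x \<in> T \<Longrightarrow> sumT g A \<in> T"
  using comm_monoid.finprod_closed[OF comm_monoid_sum_monoid, of g A] by (auto simp: sumT_def Pi_def)

lemma sumT_empty[simp]: "sumT g {} = zT"
  using comm_monoid.finprod_empty[OF comm_monoid_sum_monoid] by (simp add: sumT_def)

lemma sumT_insert:
  "finite A \<Longrightarrow> a \<notin> A \<Longrightarrow> \<forall>x\<in>insert a A. g x \<in> T \<Longrightarrow> sumT g (insert a A) = addT (g a) (sumT g A)"
  using comm_monoid.finprod_insert[OF comm_monoid_sum_monoid, of A a g] by (auto simp: sumT_def Pi_def)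

lemma sumT_cong:
  "A = B \<Longrightarrow> (\<And>x. x \<in> B \<Longrightarrow> g x = h x) \<Longrightarrow> \<forall>x\<in>B. h x \<in> T \<Longrightarrow> sumT g A = sumT h B"
  unfolding sumT_def by (rule comm_monoid.finprod_cong'[OF comm_monoid_sum_monoid]) (auto simp: Pi_def)

lemma sumT_add:
  "\<forall>x\<in>A. g x \<in> T \<Longrightarrow> \<forall>x\<in>A. h x \<in> T \<Longrightarrow> sumT (\<lambda>x. addT (g x) (h x)) A = addT (sumT g A) (sumT h A)"
  using comm_monoid.finprod_multf[OF comm_monoid_sum_monoid, of g A h] by (auto simp: sumT_def Pi_def)

lemma sumT_neutral: "(\<And>x. x \<in> A \<Longrightarrow> g x = zT) \<Longrightarrow> sumT g A = zT"
  using comm_monoid.finprod_one_eqI[OF comm_monoid_sum_monoid, of A g] by (auto simp: sumT_def)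

lemma sumT_mono_neutral:
  "finite B \<Longrightarrow> A \<subseteq> B \<Longrightarrow> (\<And>x. x \<in> B - A \<Longrightarrow> g x = zT) \<Longrightarrow> \<forall>x\<in>B. g x \<in> T \<Longrightarrow>
     sumT g A = sumT g B"
  using comm_monoid.finprod_mono_neutral_cong_left[OF comm_monoid_sum_monoid, of B A g g]
  by (auto simp: sumT_def Pi_def)

lemma additive_sumT:
  assumes F_add: "\<And>x y. x \<in> T \<Longrightarrow> y \<in> T \<Longrightarrow> F (addT x y) = addT (F x) (F y)"
    and F_zero: "F zT = zT" and F_closed: "\<And>x. x \<in> T \<Longrightarrow> F x \<in> T"
    and g: "\<forall>x\<in>A. g x \<in> T"
  shows "F (sumT g A) = sumT (\<lambda>x. F (g x)) A"
  using g
proof (induction A rule: infinite_finite_induct)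
  case (infinite A)
  then show ?case by (simp add: sumT_def F_zero comm_monoid.finprod_infinite[OF comm_monoid_sum_monoid])
next
  case empty
  then show ?case by (simp add: F_zero)
next
  case (insert a A)
  then show ?case by (simp add: sumT_insert F_add F_closed)
qed

lemma sumT_smult: "\<forall>x\<in>A. g x \<in> T \<Longrightarrow> scT c (sumT g A) = sumT (\<lambda>x. scT c (g x)) A"
  by (rule additive_sumT[where F = "scT c"]) (auto simp: smult_add_right)

lemma sumT_proj: "\<forall>x\<in>A. g x \<in> T \<Longrightarrow> pT (sumT g A) = sumT (\<lambda>x. pT (g x)) A"
  by (rule additive_sumT[where F = pT]) (auto simp: proj_add)

lemma sumT_bracket_left: "\<forall>x\<in>A. g x \<in> T \<Longrightarrow> y \<in> T \<Longrightarrow> brT (sumT g A) y = sumT (\<lambda>x. brT (g x) y) A"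
  by (rule additive_sumT[where F = "\<lambda>x. brT x y"]) (auto simp: bracket_add_left)

lemma sumT_bracket_right: "\<forall>x\<in>A. g x \<in> T \<Longrightarrow> y \<in> T \<Longrightarrow> brT y (sumT g A) = sumT (\<lambda>x. brT y (g x)) A"
  by (rule additive_sumT[where F = "\<lambda>x. brT y x"]) (auto simp: bracket_add_right)

definition lin_ext :: "(nat list \<Rightarrow> 'b) \<Rightarrow> 'k ncpoly \<Rightarrow> 'b" where
  "lin_ext g a = sumT (\<lambda>w. scT (a w) (g w)) {w. a w \<noteq> 0}"

lemma lin_ext_closed[simp]: "\<forall>w. g w \<in> T \<Longrightarrow> lin_ext g a \<in> T"
  by (simp add: lin_ext_def)

lemma lin_ext_superset:
  "\<forall>w. g w \<in> T \<Longrightarrow> finite B \<Longrightarrow> {w. a w \<noteq> 0} \<subseteq> B \<Longrightarrow>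
     lin_ext g a = sumT (\<lambda>w. scT (a w) (g w)) B"
  unfolding lin_ext_def by (rule sumT_mono_neutral) auto

lemma lin_ext_cong: "(\<And>w. a w \<noteq> 0 \<Longrightarrow> g w = g' w) \<Longrightarrow> \<forall>w. g' w \<in> T \<Longrightarrow> lin_ext g a = lin_ext g' a"
  unfolding lin_ext_def by (rule sumT_cong) auto

lemma lin_ext_zero[simp]: "lin_ext g nc_zero = zT"
  by (simp add: lin_ext_def nc_zero_def)

lemma lin_ext_zero_fun: "lin_ext (\<lambda>w. zT) a = zT"
  by (simp add: lin_ext_def sumT_neutral)

lemma lin_ext_add:
  assumes g: "\<forall>w. g w \<in> T" and a: "nc_finite a" and b: "nc_finite b"
  shows "lin_ext g (nc_add a b) = addT (lin_ext g a) (lin_ext g b)"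
proof -
  let ?B = "{w. a w \<noteq> 0} \<union> {w. b w \<noteq> 0}"
  have fin: "finite ?B" using a b by simp
  have "lin_ext g (nc_add a b) = sumT (\<lambda>w. scT (a w + b w) (g w)) ?B"
    using g fin by (subst lin_ext_superset) (auto simp: nc_add_def)
  also have "\<dots> = sumT (\<lambda>w. addT (scT (a w) (g w)) (scT (b w) (g w))) ?B"
    using g by (intro sumT_cong) (auto simp: smult_add_left)
  also have "\<dots> = addT (lin_ext g a) (lin_ext g b)"
    using g fin by (simp add: sumT_add lin_ext_superset[of g ?B])
  finally show ?thesis .
qed

lemma lin_ext_smult:
  assumes g: "\<forall>w. g w \<in> T" and a: "nc_finite a"
  shows "lin_ext g (nc_smult c a) = scT c (lin_ext g a)"
proof -
  have "lin_ext g (nc_smult c a) = sumT (\<lambda>w. scT (c * a w) (g w)) {w. a w \<noteq> 0}"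
    using g a by (subst lin_ext_superset) (auto simp: nc_smult_def)
  also have "\<dots> = sumT (\<lambda>w. scT c (scT (a w) (g w))) {w. a w \<noteq> 0}"
    using g by (intro sumT_cong) auto
  finally show ?thesis using g by (simp add: lin_ext_def sumT_smult)
qed

lemma lin_ext_monom[simp]: "\<forall>w. g w \<in> T \<Longrightarrow> lin_ext g (nc_monom u) = g u"
proof -
  assume "\<forall>w. g w \<in> T"
  moreover have "{w. nc_monom u w \<noteq> (0::'k)} = {u}" by (auto simp: nc_monom_def)
  ultimately show ?thesis by (simp add: lin_ext_def sumT_insert nc_monom_def)
qed

lemma lin_ext_sum:
  assumes "\<forall>w. g w \<in> T"
  shows "finite A \<Longrightarrow> \<forall>i\<in>A. nc_finite (U i) \<Longrightarrow>
     lin_ext g (nc_sum U A) = sumT (\<lambda>i. lin_ext g (U i)) A"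
  by (induction A rule: finite_induct)
    (simp_all add: assms nc_sum_empty nc_sum_insert lin_ext_add nc_finite_sum sumT_insert)

lemma additive_lin_ext:
  assumes F_add: "\<And>x y. x \<in> T \<Longrightarrow> y \<in> T \<Longrightarrow> F (addT x y) = addT (F x) (F y)"
    and F_smult: "\<And>c x. x \<in> T \<Longrightarrow> F (scT c x) = scT c (F x)"
    and F_closed: "\<And>x. x \<in> T \<Longrightarrow> F x \<in> T"
    and g: "\<forall>w. g w \<in> T"
  shows "F (lin_ext g a) = lin_ext (\<lambda>w. F (g w)) a"
proof -
  have "F zT = zT" using F_smult[of zT 0] F_closed[of zT] by simp
  then show ?thesis unfolding lin_ext_def
    using g by (subst additive_sumT[where F = F]) (auto simp: F_add F_closed F_smult)
qed

lemma lin_ext_mul_monom: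
  assumes g: "\<forall>w. g w \<in> T" and b: "nc_finite b"
  shows "lin_ext g (nc_mul (nc_monom u) b) = lin_ext (\<lambda>v. g (u @ v)) b"
  using b
proof (induction b rule: nc_finite_induct)
  case zero
  then show ?case by simp
next
  case (monom b v c)
  have "nc_mul (nc_monom u) (nc_add b (nc_smult c (nc_monom v))) =
      nc_add (nc_mul (nc_monom u) b) (nc_smult c (nc_monom (u @ v)))"
    by (simp add: nc_add_def nc_smult_def nc_mul_add_right nc_mul_smult_right
        flip: nc_mul_monom)
  then show ?case
    using monom g by (simp add: lin_ext_add lin_ext_smult nc_finite_mul nc_finite_smult)
qed

lemma lin_ext_mul:
  assumes g: "\<forall>w. g w \<in> T" and a: "nc_finite a" and b: "nc_finite b"
  shows "lin_ext g (nc_mul a b) = lin_ext (\<lambda>u. lin_ext (\<lambda>v. g (u @ v)) b) a"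
  using a
proof (induction a rule: nc_finite_induct)
  case zero
  then show ?case by simp
next
  case (monom a u c)
  have "nc_mul (nc_add a (nc_smult c (nc_monom u))) b =
      nc_add (nc_mul a b) (nc_smult c (nc_mul (nc_monom u) b))"
    by (simp add: nc_add_def nc_smult_def nc_mul_add_left nc_mul_smult_left)
  moreover have "\<forall>w. lin_ext (\<lambda>v. g (w @ v)) b \<in> T" using g by simp
  ultimately show ?case
    using monom g b
    by (simp add: lin_ext_add lin_ext_smult nc_finite_mul nc_finite_smult lin_ext_mul_monom)
qed

end

locale lie_pd_gens = lie_pd_alg T addT zT scT brT pT
  for T addT zT and scT :: "'k::field_char_0 \<Rightarrow> 'b \<Rightarrow> 'b" and brT pT +
  fixes n :: nat and f :: "nat \<Rightarrow> 'b"
  assumes gens_closed: "\<forall>i<n. f i \<in> T"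
begin

definition gen_ker :: "nat \<Rightarrow> 'b" where
  "gen_ker i = (if i < n then addT (f i) (scT (-1) (pT (f i))) else zT)"

definition gen_im :: "nat \<Rightarrow> 'b" where
  "gen_im i = (if i < n then pT (f i) else zT)"

lemma gen_ker_closed[simp]: "gen_ker i \<in> T"
  using gens_closed by (simp add: gen_ker_def)

lemma gen_im_closed[simp]: "gen_im i \<in> T"
  using gens_closed by (simp add: gen_im_def)

lemma proj_gen_ker[simp]: "pT (gen_ker i) = zT"
  using gens_closed by (simp add: gen_ker_def proj_add proj_smult add_neg)

lemma proj_gen_im[simp]: "pT (gen_im i) = gen_im i"
  using gens_closed by (simp add: gen_im_def)

lemma gen_ker_add_gen_im: "i < n \<Longrightarrow> addT (gen_ker i) (gen_im i) = f i"
  using gens_closed by (simp add: gen_ker_def gen_im_def add_assoc neg_add)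

definition ad_word :: "nat list \<Rightarrow> 'b \<Rightarrow> 'b" where
  "ad_word w x = foldr (\<lambda>j y. brT (gen_ker j) y) w x"

lemma ad_word_Nil[simp]: "ad_word [] x = x"
  by (simp add: ad_word_def)

lemma ad_word_Cons[simp]: "ad_word (j # w) x = brT (gen_ker j) (ad_word w x)"
  by (simp add: ad_word_def)

lemma ad_word_append: "ad_word (u @ v) x = ad_word u (ad_word v x)"
  by (simp add: ad_word_def)

lemma ad_word_closed[simp]: "x \<in> T \<Longrightarrow> ad_word w x \<in> T"
  by (induction w) auto

lemma ad_word_add: "x \<in> T \<Longrightarrow> y \<in> T \<Longrightarrow> ad_word w (addT x y) = addT (ad_word w x) (ad_word w y)"
  by (induction w) (auto simp: bracket_add_right)

lemma ad_word_smult: "x \<in> T \<Longrightarrow> ad_word w (scT c x) = scT c (ad_word w x)"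
  by (induction w) (auto simp: bracket_smult_right)

lemma proj_ad_word_ker: "x \<in> T \<Longrightarrow> pT x = zT \<Longrightarrow> pT (ad_word w x) = zT"
  by (induction w) (auto simp: proj_bracket)

lemma proj_ad_word_im: "x \<in> T \<Longrightarrow> pT x = x \<Longrightarrow> pT (ad_word w x) = ad_word w x"
  by (induction w) (auto simp: proj_bracket)

lemma ad_word_lin_ext: "\<forall>w. g w \<in> T \<Longrightarrow> ad_word u (lin_ext g b) = lin_ext (\<lambda>v. ad_word u (g v)) b"
  by (rule additive_lin_ext) (auto simp: ad_word_add ad_word_smult)

definition act :: "'k ncpoly \<Rightarrow> 'b \<Rightarrow> 'b" where
  "act a x = lin_ext (\<lambda>w. ad_word w x) a"

definition word_bracket :: "nat list \<Rightarrow> 'b" where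
  "word_bracket w = (if w = [] then zT else ad_word (butlast w) (gen_ker (last w)))"

text \<open>On a Lie element homogeneous of degree \<open>m\<close>,
  \<open>lin_ext word_bracket\<close> is \<open>m\<close> times the Lie homomorphism \<open>x\<^sub>i \<mapsto> gen_ker i\<close>; the junk value
  \<open>inverse 0 = 0\<close> at the empty word is harmless because Lie elements have no constant term.\<close>

definition lie_ext :: "'k ncpoly \<Rightarrow> 'b" where
  "lie_ext a = lin_ext (\<lambda>w. scT (inverse (of_nat (length w))) (word_bracket w)) a"

lemma act_closed[simp]: "x \<in> T \<Longrightarrow> act a x \<in> T"
  by (simp add: act_def)

lemma word_bracket_closed[simp]: "word_bracket w \<in> T"
  by (simp add: word_bracket_def)

lemma lie_ext_closed[simp]: "lie_ext a \<in> T"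
  by (simp add: lie_ext_def)

lemma word_bracket_append: "v \<noteq> [] \<Longrightarrow> word_bracket (u @ v) = ad_word u (word_bracket v)"
  by (simp add: word_bracket_def ad_word_append butlast_append)

lemma proj_lie_ext: "pT (lie_ext a) = zT"
proof -
  have "pT (word_bracket w) = zT" for w
    by (simp add: word_bracket_def proj_ad_word_ker)
  then show ?thesis
    unfolding lie_ext_def
      by (subst additive_lin_ext[where F = pT]) (auto simp: proj_add proj_smult lin_ext_zero_fun)
qed

lemma proj_act: "x \<in> T \<Longrightarrow> pT x = x \<Longrightarrow> pT (act a x) = act a x"
  unfolding act_def
    by (subst additive_lin_ext[where F = pT]) (auto simp: proj_add proj_smult proj_ad_word_im)

lemma act_add: "nc_finite a \<Longrightarrow> nc_finite b \<Longrightarrow> x \<in> T \<Longrightarrow> act (nc_add a b) x = addT (act a x) (act b x)"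
  unfolding act_def by (rule lin_ext_add) auto

lemma act_smult: "nc_finite a \<Longrightarrow> x \<in> T \<Longrightarrow> act (nc_smult c a) x = scT c (act a x)"
  unfolding act_def by (rule lin_ext_smult) auto

lemma act_zero: "act nc_zero x = zT"
  by (simp add: act_def)

lemma act_one: "x \<in> T \<Longrightarrow> act nc_one x = x"
  by (simp add: act_def nc_one_eq_monom)

lemma act_var: "x \<in> T \<Longrightarrow> act (nc_var i) x = brT (gen_ker i) x"
  by (simp add: act_def nc_var_eq_monom)

lemma act_mul: "nc_finite a \<Longrightarrow> nc_finite b \<Longrightarrow> x \<in> T \<Longrightarrow> act (nc_mul a b) x = act a (act b x)"
  unfolding act_def by (simp add: lin_ext_mul ad_word_append ad_word_lin_ext)

lemma lie_ext_add: "nc_finite a \<Longrightarrow> nc_finite b \<Longrightarrow> lie_ext (nc_add a b) = addT (lie_ext a) (lie_ext b)"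
  unfolding lie_ext_def by (rule lin_ext_add) auto

lemma lie_ext_smult: "nc_finite a \<Longrightarrow> lie_ext (nc_smult c a) = scT c (lie_ext a)"
  unfolding lie_ext_def by (rule lin_ext_smult) auto

lemma lie_ext_zero: "lie_ext nc_zero = zT"
  by (simp add: lie_ext_def)

lemma lie_ext_var: "lie_ext (nc_var i) = gen_ker i"
  by (simp add: lie_ext_def nc_var_eq_monom word_bracket_def)

lemma lie_ext_sum:
  "finite A \<Longrightarrow> \<forall>i\<in>A. nc_finite (U i) \<Longrightarrow> lie_ext (nc_sum U A) = sumT (\<lambda>i. lie_ext (U i)) A"
  unfolding lie_ext_def by (rule lin_ext_sum) auto

lemma lin_ext_word_bracket_mul:
  assumes a: "nc_finite a" and b: "nc_finite b" and b0: "b [] = 0"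
  shows "lin_ext word_bracket (nc_mul a b) = act a (lin_ext word_bracket b)"
proof -
  have "lin_ext word_bracket (nc_mul a b) = lin_ext (\<lambda>u. lin_ext (\<lambda>v. word_bracket (u @ v)) b) a"
    using a b by (simp add: lin_ext_mul)
  also have "\<dots> = lin_ext (\<lambda>u. lin_ext (\<lambda>v. ad_word u (word_bracket v)) b) a"
  proof (rule lin_ext_cong)
    fix u
    show "lin_ext (\<lambda>v. word_bracket (u @ v)) b = lin_ext (\<lambda>v. ad_word u (word_bracket v)) b"
    proof (rule lin_ext_cong)
      fix w assume "b w \<noteq> 0"
      with b0 have "w \<noteq> []" by auto
      then show "word_bracket (u @ w) = ad_word u (word_bracket w)" by (rule word_bracket_append)
    qed simp
  qed simp
  also have "\<dots> = act a (lin_ext word_bracket b)"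
    unfolding act_def by (intro lin_ext_cong) (auto simp: ad_word_lin_ext)
  finally show ?thesis .
qed

lemma lin_ext_word_bracket_homog:
  assumes "(m, u) \<in> homog_lie n"
  shows "lin_ext word_bracket u = scT (of_nat m) (lie_ext u)"
proof (cases "m = 0")
  case True
  with assms have "u = nc_zero" by (simp add: homog_lie_degree_zero)
  then show ?thesis by (simp add: lie_ext_zero)
next
  case False
  have "lie_ext u = lin_ext (\<lambda>w. scT (inverse (of_nat m)) (word_bracket w)) u"
    unfolding lie_ext_def by (rule lin_ext_cong) (use homog_lieD[OF assms] in auto)
  also have "\<dots> = scT (inverse (of_nat m)) (lin_ext word_bracket u)"
    by (rule additive_lin_ext[symmetric]) (auto simp: smult_add_right mult.commute)
  finally show ?thesis using False by simp
qed

lemma act_comm: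
  assumes a: "nc_finite a" and b: "nc_finite b"
    and act_a: "\<forall>x\<in>T. act a x = brT (lie_ext a) x" and act_b: "\<forall>x\<in>T. act b x = brT (lie_ext b) x"
    and x: "x \<in> T"
  shows "act (nc_comm a b) x = brT (brT (lie_ext a) (lie_ext b)) x"
proof -
  have "act (nc_comm a b) x = addT (act (nc_mul a b) x) (scT (-1) (act (nc_mul b a) x))"
    unfolding nc_comm_def using a b x by (simp add: act_add act_smult nc_finite_mul nc_finite_smult)
  also have "\<dots> = addT (brT (lie_ext a) (brT (lie_ext b) x))
      (scT (-1) (brT (lie_ext b) (brT (lie_ext a) x)))"
    using a b x act_a act_b by (simp add: act_mul)
  also have "\<dots> = brT (brT (lie_ext a) (lie_ext b)) x"
    using x by (simp add: bracket_bracket_left)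
  finally show ?thesis .
qed

text \<open>The Dynkin--Specht--Wever argument: with \<open>D = lin_ext word_bracket\<close>, one has
  \<open>D (a b) = act a (D b)\<close>, so for homogeneous \<open>a, b\<close> of degrees \<open>p, q\<close> the value
  \<open>D [a, b] = (p + q) [lie_ext a, lie_ext b]\<close>, and \<open>p + q\<close> can be cancelled in characteristic 0.\<close>

lemma lie_ext_comm_homog:
  assumes ha: "(p, a) \<in> homog_lie n" and hb: "(q, b) \<in> homog_lie n"
    and act_a: "\<forall>x\<in>T. act a x = brT (lie_ext a) x" and act_b: "\<forall>x\<in>T. act b x = brT (lie_ext b) x"
  shows "lie_ext (nc_comm a b) = brT (lie_ext a) (lie_ext b)"
proof (cases "p + q = 0")
  case True
  then have "a = nc_zero" "nc_comm a b = nc_zero"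
    using ha homog_comm[OF ha hb] by (simp_all add: homog_lie_degree_zero)
  then show ?thesis by (simp add: lie_ext_zero)
next
  case False
  have hab: "(p + q, nc_comm a b) \<in> homog_lie n" using ha hb by (rule homog_comm)
  have fin: "nc_finite a" "nc_finite b" using ha hb by (simp_all add: homog_lie_finite)
  have const: "a [] = 0" "b [] = 0" using homog_lieD[OF ha] homog_lieD[OF hb] by simp_all
  define X where "X = brT (lie_ext a) (lie_ext b)"
  have X: "X \<in> T" by (simp add: X_def)
  have "scT (of_nat (p + q)) (lie_ext (nc_comm a b)) = lin_ext word_bracket (nc_comm a b)"
    using hab by (simp add: lin_ext_word_bracket_homog)
  also have "\<dots> = addT (lin_ext word_bracket (nc_mul a b))
      (scT (-1) (lin_ext word_bracket (nc_mul b a)))"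
    unfolding nc_comm_def using fin
      by (simp add: lin_ext_add lin_ext_smult nc_finite_mul nc_finite_smult)
  also have "\<dots> = addT (act a (lin_ext word_bracket b)) (scT (-1) (act b (lin_ext word_bracket a)))"
    using fin const by (simp add: lin_ext_word_bracket_mul)
  also have "\<dots> = addT (scT (of_nat q) X) (scT (-1) (scT (of_nat p) (scT (-1) X)))"
    using ha hb act_a act_b
    by (simp add: lin_ext_word_bracket_homog X_def bracket_smult_right
        bracket_anticomm[of "lie_ext a" "lie_ext b"])
  also have "\<dots> = scT (of_nat (p + q)) X"
    using X by (simp add: smult_add_left add_commute)
  finally have "scT (of_nat (p + q)) (lie_ext (nc_comm a b)) = scT (of_nat (p + q)) X" .
  moreover have "(of_nat (p + q) :: 'k) \<noteq> 0"
    using False by (simp only: of_nat_eq_0_iff not_False_eq_True)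
  ultimately have "lie_ext (nc_comm a b) = X" by (rule smult_left_cancel[OF lie_ext_closed X])
  then show ?thesis by (simp add: X_def)
qed

lemma act_homog_lie: "(m, u) \<in> homog_lie n \<Longrightarrow> \<forall>x\<in>T. act u x = brT (lie_ext u) x"
proof (induction m u rule: homog_lie.induct)
  case (homog_zero m)
  then show ?case by (simp add: act_zero lie_ext_zero)
next
  case (homog_var i)
  then show ?case by (simp add: act_var lie_ext_var)
next
  case (homog_add m a b)
  then show ?case by (simp add: homog_lie_finite act_add lie_ext_add bracket_add_left)
next
  case (homog_smult m a c)
  then show ?case by (simp add: homog_lie_finite act_smult lie_ext_smult bracket_smult_left)
next
  case (homog_comm p a q b)
  then show ?case by (simp add: homog_lie_finite act_comm lie_ext_comm_homog)
qed

lemma lie_ext_comm: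
  assumes u: "u \<in> free_lie n" and v: "v \<in> free_lie n"
  shows "lie_ext (nc_comm u v) = brT (lie_ext u) (lie_ext v)"
proof -
  obtain N1 where u_sum: "u = nc_sum (\<lambda>m. nc_homog_part m u) {..N1}"
    using nc_sum_homog_parts free_lie_finite[OF u] by blast
  obtain N2 where v_sum: "v = nc_sum (\<lambda>m. nc_homog_part m v) {..N2}"
    using nc_sum_homog_parts free_lie_finite[OF v] by blast
  define U where "U m = nc_homog_part m u" for m
  define V where "V m = nc_homog_part m v" for m
  have hU: "(m, U m) \<in> homog_lie n" and hV: "(m, V m) \<in> homog_lie n" for m
    unfolding U_def V_def using homog_lie_homog_part u v by blast+
  have fU: "nc_finite (U i)" and fV: "nc_finite (V j)"
    and fUV: "nc_finite (nc_comm (U i) (V j))" for i j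
    using hU hV homog_comm[OF hU hV] by (blast intro: homog_lie_finite)+
  have lie_u: "lie_ext u = sumT (\<lambda>i. lie_ext (U i)) {..N1}"
    by (subst u_sum) (simp add: U_def lie_ext_sum fU[unfolded U_def])
  have lie_v: "lie_ext v = sumT (\<lambda>j. lie_ext (V j)) {..N2}"
    by (subst v_sum) (simp add: V_def lie_ext_sum fV[unfolded V_def])
  have "lie_ext (nc_comm u v) = lie_ext (nc_sum (\<lambda>i. nc_sum (\<lambda>j. nc_comm (U i) (V j)) {..N2}) {..N1})"
    by (subst u_sum, subst v_sum) (simp only: nc_comm_sum U_def V_def)
  also have "\<dots> = sumT (\<lambda>i. sumT (\<lambda>j. lie_ext (nc_comm (U i) (V j))) {..N2}) {..N1}"
    by (simp add: lie_ext_sum fUV nc_finite_sum)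
  also have "\<dots> = sumT (\<lambda>i. sumT (\<lambda>j. brT (lie_ext (U i)) (lie_ext (V j))) {..N2}) {..N1}"
    by (simp add: lie_ext_comm_homog[OF hU hV act_homog_lie[OF hU] act_homog_lie[OF hV]])
  also have "\<dots> = sumT (\<lambda>i. brT (lie_ext (U i)) (sumT (\<lambda>j. lie_ext (V j)) {..N2})) {..N1}"
    by (rule sumT_cong) (auto simp: sumT_bracket_right)
  also have "\<dots> = brT (lie_ext u) (lie_ext v)"
    by (simp add: lie_u lie_v sumT_bracket_left)
  finally show ?thesis .
qed

lemma act_free_lie: "u \<in> free_lie n \<Longrightarrow> x \<in> T \<Longrightarrow> act u x = brT (lie_ext u) x"
proof (induction u arbitrary: x rule: free_lie.induct)
  case fl_zero
  then show ?case by (simp add: act_zero lie_ext_zero)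
next
  case (fl_var i)
  then show ?case by (simp add: act_var lie_ext_var)
next
  case (fl_add a b)
  then show ?case by (simp add: free_lie_finite act_add lie_ext_add bracket_add_left)
next
  case (fl_smult a c)
  then show ?case by (simp add: free_lie_finite act_smult lie_ext_smult bracket_smult_left)
next
  case (fl_comm a b)
  then show ?case by (simp add: free_lie_finite act_comm lie_ext_comm)
qed

definition module_part :: "(nat \<Rightarrow> 'k ncpoly) \<Rightarrow> 'b" where
  "module_part v = sumT (\<lambda>i. act (v i) (gen_im i)) {..<n}"

definition free_ext :: "'k lv \<Rightarrow> 'b" where
  "free_ext x = addT (lie_ext (fst x)) (module_part (snd x))"

lemma module_part_closed[simp]: "module_part v \<in> T"
  by (simp add: module_part_def)

lemma free_ext_closed: "free_ext x \<in> T"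
  by (simp add: free_ext_def)

lemma proj_module_part: "v \<in> free_module n \<Longrightarrow> pT (module_part v) = module_part v"
  unfolding module_part_def by (subst sumT_proj) (auto intro!: sumT_cong simp: proj_act)

lemma free_ext_gen: "i < n \<Longrightarrow> free_ext (lv_gen i) = f i"
proof -
  assume i: "i < n"
  have "module_part (mod_gen i) = sumT (\<lambda>j. if j = i then gen_im i else zT) {..<n}"
    unfolding module_part_def by (rule sumT_cong) (auto simp: mod_gen_def act_one act_zero)
  also have "\<dots> = addT (gen_im i) (sumT (\<lambda>j. if j = i then gen_im i else zT) ({..<n} - {i}))"
    using i sumT_insert[of "{..<n} - {i}" i "\<lambda>j. if j = i then gen_im i else zT"]
    by (simp add: insert_absorb)
  also have "\<dots> = gen_im i"
    by (subst sumT_neutral) auto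
  finally show ?thesis
    using i by (simp add: free_ext_def lv_gen_def lie_ext_var gen_ker_add_gen_im)
qed

lemma free_ext_add:
  assumes "x \<in> lv_carrier n" "y \<in> lv_carrier n"
  shows "free_ext (lv_add x y) = addT (free_ext x) (free_ext y)"
proof -
  obtain l1 v1 l2 v2 where xy: "x = (l1, v1)" "y = (l2, v2)" by (cases x, cases y)
  with assms have l: "nc_finite l1" "nc_finite l2" and v: "v1 \<in> free_module n" "v2 \<in> free_module n"
    by (auto simp: lv_carrier_def free_lie_finite)
  have "module_part (\<lambda>i. nc_add (v1 i) (v2 i)) =
      sumT (\<lambda>i. addT (act (v1 i) (gen_im i)) (act (v2 i) (gen_im i))) {..<n}"
    unfolding module_part_def
    by (rule sumT_cong) (auto simp: act_add free_module_finite[OF v(1)] free_module_finite[OF v(2)])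
  also have "\<dots> = addT (module_part v1) (module_part v2)"
    by (simp add: sumT_add module_part_def)
  finally show ?thesis
    by (simp add: xy lv_add_def free_ext_def lie_ext_add l add_add_swap)
qed

lemma free_ext_smult:
  assumes "x \<in> lv_carrier n"
  shows "free_ext (lv_smult c x) = scT c (free_ext x)"
proof -
  obtain l v where x: "x = (l, v)" by (cases x)
  with assms have l: "nc_finite l" and v: "v \<in> free_module n"
    by (auto simp: lv_carrier_def free_lie_finite)
  have "module_part (\<lambda>i. nc_smult c (v i)) = sumT (\<lambda>i. scT c (act (v i) (gen_im i))) {..<n}"
    unfolding module_part_def by (rule sumT_cong) (auto simp: act_smult free_module_finite[OF v])
  also have "\<dots> = scT c (module_part v)"
    by (simp add: sumT_smult module_part_def)
  finally show ?thesis
    by (simp add: x lv_smult_def free_ext_def lie_ext_smult l smult_add_right)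
qed

lemma free_ext_proj:
  assumes "x \<in> lv_carrier n"
  shows "free_ext (lv_proj x) = pT (free_ext x)"
proof -
  obtain l v where x: "x = (l, v)" by (cases x)
  with assms have "v \<in> free_module n" by (auto simp: lv_carrier_def)
  then show ?thesis
    by (simp add: x lv_proj_def free_ext_def lie_ext_zero proj_add proj_lie_ext proj_module_part)
qed

lemma free_ext_bracket:
  assumes "x \<in> lv_carrier n" "y \<in> lv_carrier n"
  shows "free_ext (lv_bracket x y) = brT (free_ext x) (free_ext y)"
proof -
  obtain l1 v1 l2 v2 where xy: "x = (l1, v1)" "y = (l2, v2)" by (cases x, cases y)
  with assms have L: "l1 \<in> free_lie n" "l2 \<in> free_lie n"
    and v: "v1 \<in> free_module n" "v2 \<in> free_module n"
    by (auto simp: lv_carrier_def)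
  define P1 P2 M1 M2
    where "P1 = lie_ext l1" "P2 = lie_ext l2" "M1 = module_part v1" "M2 = module_part v2"
  have T: "P1 \<in> T" "P2 \<in> T" "M1 \<in> T" "M2 \<in> T" by (simp_all add: P1_P2_M1_M2_def)
  have "module_part (\<lambda>i. nc_add (lie_act l1 v2 i) (nc_smult (-1) (lie_act l2 v1 i))) =
      sumT (\<lambda>i. addT (brT P1 (act (v2 i) (gen_im i)))
        (scT (-1) (brT P2 (act (v1 i) (gen_im i))))) {..<n}"
    unfolding module_part_def
  proof (rule sumT_cong)
    fix i assume "i \<in> {..<n}"
    then have "nc_finite (v1 i)" "nc_finite (v2 i)" using v by (auto simp: free_module_finite)
    then show "act (nc_add (lie_act l1 v2 i) (nc_smult (-1) (lie_act l2 v1 i))) (gen_im i) =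
        addT (brT P1 (act (v2 i) (gen_im i))) (scT (-1) (brT P2 (act (v1 i) (gen_im i))))"
      using L by (simp add: lie_act_def act_add act_smult act_mul nc_finite_mul nc_finite_smult
          free_lie_finite act_free_lie P1_P2_M1_M2_def)
  qed (simp_all add: T)
  also have "\<dots> = addT (brT P1 M2) (scT (-1) (brT P2 M1))"
    using T by (simp add: sumT_add sumT_smult sumT_bracket_right module_part_def P1_P2_M1_M2_def)
  finally have module: "module_part (\<lambda>i. nc_add (lie_act l1 v2 i) (nc_smult (-1) (lie_act l2 v1 i))) =
      addT (brT P1 M2) (scT (-1) (brT P2 M1))" .
  have "brT M1 M2 = zT"
    using v by (intro bracket_proj_image_eq_zero) (simp_all add: proj_module_part P1_P2_M1_M2_def)
  moreover have "brT M1 P2 = scT (-1) (brT P2 M1)" by (rule bracket_anticomm[OF T(2,3)])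
  ultimately have "free_ext (lv_bracket x y) =
      addT (addT (brT P1 P2) (brT P1 M2)) (addT (brT M1 P2) (brT M1 M2))"
    using T
      by (simp add: xy lv_bracket_def free_ext_def module lie_ext_comm[OF L] P1_P2_M1_M2_def add_assoc)
  also have "\<dots> = addT (addT (brT P1 P2) (brT M1 P2)) (addT (brT P1 M2) (brT M1 M2))"
    using T by (simp add: add_add_swap)
  also have "\<dots> = brT (free_ext x) (free_ext y)"
    using T by (simp add: xy free_ext_def P1_P2_M1_M2_def bracket_add_left bracket_add_right)
  finally show ?thesis .
qed

lemma lie_pd_hom_free_ext:
  "lie_pd_hom (lv_carrier n) lv_add lv_smult lv_bracket lv_proj T addT scT brT pT free_ext"
  unfolding lie_pd_hom_def
  by (simp add: free_ext_closed free_ext_add free_ext_smult free_ext_bracket free_ext_proj)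

end

section \<open>Generation of \<open>L \<oplus> V\<close> by the \<open>m\<^sub>i\<close>\<close>

inductive_set lv_generated :: "nat \<Rightarrow> 'k::field lv set" for n where
  gen_gen: "i < n \<Longrightarrow> lv_gen i \<in> lv_generated n"
| gen_zero: "lv_zero \<in> lv_generated n"
| gen_add: "x \<in> lv_generated n \<Longrightarrow> y \<in> lv_generated n \<Longrightarrow> lv_add x y \<in> lv_generated n"
| gen_smult: "x \<in> lv_generated n \<Longrightarrow> lv_smult c x \<in> lv_generated n"
| gen_bracket: "x \<in> lv_generated n \<Longrightarrow> y \<in> lv_generated n \<Longrightarrow> lv_bracket x y \<in> lv_generated n"
| gen_proj: "x \<in> lv_generated n \<Longrightarrow> lv_proj x \<in> lv_generated n"

lemma lv_generated_subset_carrier: "x \<in> lv_generated n \<Longrightarrow> x \<in> lv_carrier n"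
  by (induction rule: lv_generated.induct)
    (auto intro: lv_gen_closed lv_zero_closed lv_add_closed lv_smult_closed lv_bracket_closed
      lv_proj_closed)

definition mod_slot :: "nat \<Rightarrow> 'k::field ncpoly \<Rightarrow> nat \<Rightarrow> 'k ncpoly" where
  "mod_slot i a = (\<lambda>k. if k = i then a else nc_zero)"

lemma lv_generated_free_lie:
  fixes l :: "'k::field ncpoly"
  shows "l \<in> free_lie n \<Longrightarrow> (l, \<lambda>i. nc_zero) \<in> lv_generated n"
proof (induction rule: free_lie.induct)
  case fl_zero
  then show ?case using gen_zero[of n] by (simp add: lv_zero_def)
next
  case (fl_var i)
  have "(nc_var i, \<lambda>i. nc_zero) = (lv_add :: 'k lv \<Rightarrow> _) (lv_gen i) (lv_smult (-1) (lv_proj (lv_gen i)))"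
    by (simp add: nc_simps lv_add_def lv_smult_def lv_proj_def lv_gen_def mod_gen_def fun_eq_iff
        nc_one_def)
  with fl_var show ?case by (simp add: gen_add gen_smult gen_proj gen_gen)
next
  case (fl_add a b)
  have "(nc_add a b, \<lambda>i. nc_zero) = (lv_add :: 'k lv \<Rightarrow> _) (a, \<lambda>i. nc_zero) (b, \<lambda>i. nc_zero)"
    by (simp add: lv_add_def nc_add_def nc_zero_def)
  with fl_add show ?case by (simp add: gen_add)
next
  case (fl_smult a c)
  have "(nc_smult c a, \<lambda>i. nc_zero) = lv_smult c (a, \<lambda>i. nc_zero)"
    by (simp add: lv_smult_def nc_smult_def nc_zero_def)
  with fl_smult show ?case by (simp add: gen_smult)
next
  case (fl_comm a b)
  have "(nc_comm a b, \<lambda>i. nc_zero) = lv_bracket (a, \<lambda>i. nc_zero) (b, \<lambda>i. nc_zero)"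
    by (simp add: lv_bracket_def lie_act_def nc_simps)
  with fl_comm show ?case by (simp add: gen_bracket)
qed

lemma lv_generated_monom:
  fixes w :: "nat list"
  shows "i < n \<Longrightarrow> \<forall>j\<in>set w. j < n \<Longrightarrow>
    (nc_zero, mod_slot i (nc_monom w) :: nat \<Rightarrow> 'k::field ncpoly) \<in> lv_generated n"
proof (induction w)
  case Nil
  have "(nc_zero, mod_slot i (nc_monom [])) = (lv_proj (lv_gen i) :: 'k lv)"
    by (simp add: lv_proj_def lv_gen_def mod_slot_def mod_gen_def flip: nc_one_eq_monom)
  with Nil show ?case by (simp add: gen_proj gen_gen)
next
  case (Cons j w)
  have "(nc_zero, mod_slot i (nc_monom (j # w))) =
      (lv_bracket :: 'k lv \<Rightarrow> _) (nc_var j, \<lambda>i. nc_zero) (nc_zero, mod_slot i (nc_monom w))"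
    by (simp add: lv_bracket_def lie_act_def mod_slot_def fun_eq_iff nc_var_eq_monom
        nc_mul_monom[of "[j]" w, simplified] nc_simps)
  moreover have "(nc_var j, \<lambda>i. nc_zero) \<in> lv_generated n"
    using Cons by (simp add: lv_generated_free_lie fl_var)
  moreover have "(nc_zero, mod_slot i (nc_monom w) :: nat \<Rightarrow> 'k ncpoly) \<in> lv_generated n"
    using Cons by simp
  ultimately show ?case by (metis gen_bracket)
qed

lemma lv_generated_mod_slot:
  fixes a :: "'k::field ncpoly"
  assumes a: "a \<in> free_assoc n" and i: "i < n"
  shows "(nc_zero, mod_slot i a) \<in> lv_generated n"
  using free_assoc_finite[OF a]
proof (induction a rule: nc_finite_induct)
  case zero
  have "(nc_zero, mod_slot i nc_zero) = (lv_zero :: 'k lv)"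
    by (simp add: lv_zero_def mod_slot_def fun_eq_iff)
  then show ?case by (simp add: gen_zero)
next
  case (monom b u c)
  have "\<forall>j\<in>set u. j < n" using monom.hyps(2) a by (auto simp: free_assoc_def)
  then have "(nc_zero, mod_slot i (nc_monom u) :: nat \<Rightarrow> 'k ncpoly) \<in> lv_generated n"
    by (rule lv_generated_monom[OF i])
  moreover have "(nc_zero, mod_slot i (nc_add b (nc_smult c (nc_monom u)))) =
      (lv_add :: 'k lv \<Rightarrow> _) (nc_zero, mod_slot i b) (lv_smult c (nc_zero, mod_slot i (nc_monom u)))"
    by (simp add: lv_add_def lv_smult_def mod_slot_def nc_add_def nc_smult_def nc_zero_def fun_eq_iff)
  ultimately show ?case using monom.IH by (metis gen_add gen_smult)
qed

lemma lv_generated_free_module: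
  fixes v :: "nat \<Rightarrow> 'k::field ncpoly"
  assumes v: "v \<in> free_module n"
  shows "(nc_zero, v) \<in> lv_generated n"
proof -
  have partial: "(nc_zero, \<lambda>i. if i < k then v i else nc_zero) \<in> lv_generated n" if "k \<le> n" for k
    using that
  proof (induction k)
    case 0
    have "(nc_zero, \<lambda>i. if i < 0 then v i else nc_zero) = (lv_zero :: 'k lv)"
      by (simp add: lv_zero_def)
    then show ?case by (simp add: gen_zero)
  next
    case (Suc k)
    have eq: "(nc_zero, \<lambda>i. if i < Suc k then v i else nc_zero) =
        (lv_add :: 'k lv \<Rightarrow> _) (nc_zero, \<lambda>i. if i < k then v i else nc_zero) (nc_zero, mod_slot k (v k))"
      by (simp add: lv_add_def mod_slot_def nc_add_def nc_zero_def fun_eq_iff)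
    have "(nc_zero, mod_slot k (v k)) \<in> lv_generated n"
      using v Suc.prems by (intro lv_generated_mod_slot) (simp_all add: free_module_def)
    moreover have "(nc_zero, \<lambda>i. if i < k then v i else nc_zero) \<in> lv_generated n"
      using Suc.prems by (intro Suc.IH) simp
    ultimately show ?case unfolding eq by (intro gen_add)
  qed
  have "(\<lambda>i. if i < n then v i else nc_zero) = v" using v by (auto simp: free_module_def)
  with partial[of n] show ?thesis by simp
qed

lemma lv_carrier_subset_generated: "x \<in> lv_carrier n \<Longrightarrow> x \<in> lv_generated n"
proof -
  assume "x \<in> lv_carrier n"
  then obtain l v where x: "x = (l, v)" "l \<in> free_lie n" "v \<in> free_module n"
    by (auto simp: lv_carrier_def)
  have "lv_add (l, \<lambda>i. nc_zero) (nc_zero, v) \<in> lv_generated n"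
    by (intro gen_add lv_generated_free_lie lv_generated_free_module x(2,3))
  moreover have "lv_add (l, \<lambda>i. nc_zero) (nc_zero, v) = x"
    by (simp add: x lv_add_def nc_add_def nc_zero_def)
  ultimately show ?thesis by simp
qed

lemma (in lie_pd_alg) lie_pd_hom_eq_on_generated:
  assumes h1: "lie_pd_hom (lv_carrier n) lv_add lv_smult lv_bracket lv_proj T addT scT brT pT h1"
    and h2: "lie_pd_hom (lv_carrier n) lv_add lv_smult lv_bracket lv_proj T addT scT brT pT h2"
    and gens: "\<forall>i<n. h1 (lv_gen i) = h2 (lv_gen i)"
  shows "x \<in> lv_generated n \<Longrightarrow> h1 x = h2 x"
proof (induction rule: lv_generated.induct)
  case gen_zero
  have "h (lv_smult 0 lv_zero) = scT 0 (h lv_zero)" "h lv_zero \<in> T"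
    if "lie_pd_hom (lv_carrier n) lv_add lv_smult lv_bracket lv_proj T addT scT brT pT h" for h
    using that lv_zero_closed[of n] unfolding lie_pd_hom_def by blast+
  moreover have "lv_smult 0 lv_zero = (lv_zero :: 'k lv)"
    by (simp add: lv_smult_def lv_zero_def nc_smult_def nc_zero_def)
  ultimately show ?case using h1 h2 by (metis smult_zero_left)
next
  case (gen_gen i)
  then show ?case using gens by simp
next
  case (gen_add x y)
  then show ?case using h1 h2 by (simp add: lie_pd_hom_def lv_generated_subset_carrier)
next
  case (gen_smult x c)
  then show ?case using h1 h2 by (simp add: lie_pd_hom_def lv_generated_subset_carrier)
next
  case (gen_bracket x y)
  then show ?case using h1 h2 by (simp add: lie_pd_hom_def lv_generated_subset_carrier)
next
  case (gen_proj x)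
  then show ?case using h1 h2 by (simp add: lie_pd_hom_def lv_generated_subset_carrier)
qed

lemma (in lie_pd_gens) free_ext_unique:
  assumes "lie_pd_hom (lv_carrier n) lv_add lv_smult lv_bracket lv_proj T addT scT brT pT h"
    and "\<forall>i<n. h (lv_gen i) = f i" and "x \<in> lv_carrier n"
  shows "h x = free_ext x"
  using lie_pd_hom_eq_on_generated[OF assms(1) lie_pd_hom_free_ext]
    lv_carrier_subset_generated[OF assms(3)] assms(2) free_ext_gen
  by simp

theorem theorem3:
  fixes n :: nat
    and T :: "'b set" and addT :: "'b \<Rightarrow> 'b \<Rightarrow> 'b" and zT :: 'b
    and scT :: "'k::field_char_0 \<Rightarrow> 'b \<Rightarrow> 'b"
    and brT :: "'b \<Rightarrow> 'b \<Rightarrow> 'b" and pT :: "'b \<Rightarrow> 'b"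
    and f :: "nat \<Rightarrow> 'b"
  assumes "infinite (UNIV :: 'k set)"
  shows "lie_pd_on (lv_carrier n) lv_add lv_zero (lv_smult :: 'k \<Rightarrow> _) lv_bracket lv_proj
    \<and> (\<forall>i<n. (lv_gen i :: 'k lv) \<in> lv_carrier n)
    \<and> (lie_pd_on T addT zT scT brT pT \<longrightarrow> (\<forall>i<n. f i \<in> T) \<longrightarrow>
        (\<exists>h. lie_pd_hom (lv_carrier n) lv_add lv_smult lv_bracket lv_proj T addT scT brT pT h
             \<and> (\<forall>i<n. h (lv_gen i) = f i)
             \<and> (\<forall>h'. lie_pd_hom (lv_carrier n) lv_add lv_smult lv_bracket lv_proj T addT scT brT pT h'
                     \<and> (\<forall>i<n. h' (lv_gen i) = f i) \<longrightarrow> (\<forall>x\<in>lv_carrier n. h' x = h x))))"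
proof (intro conjI impI)
  show "lie_pd_on (lv_carrier n) lv_add lv_zero (lv_smult :: 'k \<Rightarrow> _) lv_bracket lv_proj"
    by (rule lie_pd_on_lv)
  show "\<forall>i<n. (lv_gen i :: 'k lv) \<in> lv_carrier n"
    by (simp add: lv_gen_closed)
next
  assume T: "lie_pd_on T addT zT scT brT pT" and f: "\<forall>i<n. f i \<in> T"
  interpret lie_pd_gens T addT zT scT brT pT n f
    by (intro lie_pd_gens.intro lie_pd_gens_axioms.intro lie_pd_on_imp_lie_pd_alg T f)
  show "\<exists>h. lie_pd_hom (lv_carrier n) lv_add lv_smult lv_bracket lv_proj T addT scT brT pT h
             \<and> (\<forall>i<n. h (lv_gen i) = f i)
             \<and> (\<forall>h'. lie_pd_hom (lv_carrier n) lv_add lv_smult lv_bracket lv_proj T addT scT brT pT h'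
                     \<and> (\<forall>i<n. h' (lv_gen i) = f i) \<longrightarrow> (\<forall>x\<in>lv_carrier n. h' x = h x))"
    using lie_pd_hom_free_ext free_ext_gen free_ext_unique by blast
qed

end
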